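(* Let $0 \le m < n$, let $L$ be an $m$-dimensional affine subspace of $\mathbb{R}^n$, and let $\varepsilon > 0$. Then there exists an embedding $\psi\colon \mathbb{R}^n \setminus L \to \mathbb{R}^n \setminus L$ such that (1) $\psi^{-1}\colon \psi(\mathbb{R}^n\setminus L) \to \mathbb{R}^n \setminus L$ is uniformly continuous; (2) $|\psi(x) - x| < \varepsilon$ for all $x \in \mathbb{R}^n \setminus L$; (3) the closure of $\psi(\mathbb{R}^n \setminus L)$ in $\mathbb{R}^n$ is disjoint from $L$. *)

theory Defs
  imports "HOL-Analysis.Analysis"
begin

end

theory Submission
  imports Defs
begin

text \<open>Push every point of \<open>- L\<close> a distance \<open>\<delta>\<close> further away from \<open>L\<close>, along the normal line
  through its closest point. Since \<open>L\<close> is affine, the closest point is constant along that line,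
  so pushing by \<open>\<delta>\<close> and by \<open>-\<delta>\<close> are inverse to each other between \<open>- L\<close> and the points at
  distance \<open>> \<delta>\<close> from \<open>L\<close>. The inverse is Lipschitz because the unit normal direction is
  Lipschitz at distance \<open>\<ge> \<delta>\<close> from \<open>L\<close>, and the image stays at distance \<open>\<ge> \<delta>\<close> from \<open>L\<close>
  even after taking the closure.\<close>

lemma norm_sgn_diff_le:
  fixes a b :: "'a::real_normed_vector"
  assumes "a \<noteq> 0"
  shows "norm (sgn a - sgn b) \<le> 2 * norm (a - b) / norm a"
proof (cases "b = 0")
  case True
  then show ?thesis using assms by (simp add: norm_sgn)
next
  case False
  have na: "norm a > 0" and nb: "norm b > 0" using assms False by auto
  have coeff: "1 / norm a - (norm b - norm a) / (norm a * norm b) = 1 / norm b"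
    using na nb by (simp add: field_simps)
  have "(a - b) /\<^sub>R norm a + ((norm b - norm a) / (norm a * norm b)) *\<^sub>R b
      = a /\<^sub>R norm a - (1 / norm a - (norm b - norm a) / (norm a * norm b)) *\<^sub>R b"
    by (simp add: algebra_simps inverse_eq_divide)
  then have split: "sgn a - sgn b = (a - b) /\<^sub>R norm a + ((norm b - norm a) / (norm a * norm b)) *\<^sub>R b"
    by (simp add: coeff sgn_div_norm inverse_eq_divide)
  have "norm (((norm b - norm a) / (norm a * norm b)) *\<^sub>R b) = \<bar>norm b - norm a\<bar> / norm a"
    using na nb by (simp add: abs_mult)
  also have "\<dots> \<le> norm (a - b) / norm a"
    using na norm_triangle_ineq3[of b a] norm_minus_commute[of a b] by (intro divide_right_mono) auto
  finally have "norm (((norm b - norm a) / (norm a * norm b)) *\<^sub>R b) \<le> norm (a - b) / norm a" .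
  moreover have "norm ((a - b) /\<^sub>R norm a) = norm (a - b) / norm a"
    using na by (simp add: inverse_eq_divide)
  ultimately show ?thesis
    using norm_triangle_ineq[of "(a - b) /\<^sub>R norm a" "((norm b - norm a) / (norm a * norm b)) *\<^sub>R b"]
    unfolding split by linarith
qed

lemma closest_point_affine_orthogonal:
  fixes L :: "'a::euclidean_space set"
  assumes "affine L" "L \<noteq> {}" "z \<in> L"
  shows "inner (x - closest_point L x) (z - closest_point L x) = 0"
proof -
  let ?c = "closest_point L x"
  have cl: "closed L" and cv: "convex L"
    using assms(1) affine_closed affine_imp_convex by blast+
  have "?c \<in> L" using closest_point_in_set[OF cl assms(2)] .
  \<comment> \<open>the reflection of \<open>z\<close> in \<open>?c\<close> lies in \<open>L\<close> as well\<close>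
  then have "(1 - 2) *\<^sub>R z + 2 *\<^sub>R ?c \<in> L"
    using assms(1,3) unfolding affine_alt by blast
  then have "inner (x - ?c) (((1 - 2) *\<^sub>R z + 2 *\<^sub>R ?c) - ?c) \<le> 0"
    by (rule closest_point_dot[OF cv cl])
  then have "inner (x - ?c) (?c - z) \<le> 0"
    by (simp add: algebra_simps)
  moreover have "inner (x - ?c) (z - ?c) \<le> 0"
    using closest_point_dot[OF cv cl assms(3)] .
  ultimately show ?thesis
    by (metis antisym inner_minus_right minus_diff_eq neg_le_0_iff_le)
qed

lemma closest_point_affine_normal_line:
  fixes L :: "'a::euclidean_space set"
  assumes "affine L" "L \<noteq> {}"
  shows "closest_point L (closest_point L x + s *\<^sub>R (x - closest_point L x)) = closest_point L x"
proof -
  let ?c = "closest_point L x"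
  let ?y = "?c + s *\<^sub>R (x - ?c)"
  have cl: "closed L" and cv: "convex L"
    using assms(1) affine_closed affine_imp_convex by blast+
  have "\<forall>z\<in>L. dist ?y ?c \<le> dist ?y z"
  proof
    fix z assume "z \<in> L"
    have orth: "orthogonal (s *\<^sub>R (x - ?c)) (?c - z)"
      using closest_point_affine_orthogonal[OF assms \<open>z \<in> L\<close>, of x]
      by (simp add: orthogonal_def inner_diff_right)
    have eq: "?y - z = s *\<^sub>R (x - ?c) + (?c - z)"
      by (simp add: algebra_simps)
    have "(dist ?y z)\<^sup>2 = (norm (s *\<^sub>R (x - ?c)))\<^sup>2 + (norm (?c - z))\<^sup>2"
      unfolding dist_norm eq by (rule norm_add_Pythagorean[OF orth])
    then have "(dist ?y ?c)\<^sup>2 \<le> (dist ?y z)\<^sup>2"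
      by (simp add: dist_norm)
    then show "dist ?y ?c \<le> dist ?y z"
      by (rule power2_le_imp_le) simp
  qed
  then show ?thesis
    using closest_point_unique[OF cv cl closest_point_in_set[OF cl assms(2)]] by simp
qed

lemma norm_minus_closest_point_diff_le:
  fixes S :: "'a::euclidean_space set"
  assumes "convex S" "closed S" "S \<noteq> {}"
  shows "norm ((y - closest_point S y) - (z - closest_point S z)) \<le> 2 * dist y z"
proof -
  have "norm ((y - closest_point S y) - (z - closest_point S z))
      \<le> norm (y - z) + norm (closest_point S y - closest_point S z)"
    using norm_triangle_ineq4[of "y - z" "closest_point S y - closest_point S z"]
    by (simp add: algebra_simps)
  also have "norm (closest_point S y - closest_point S z) \<le> dist y z"
    using closest_point_lipschitz[OF assms] by (simp add: dist_norm)
  finally show ?thesis by (simp add: dist_norm)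
qed

definition push_off :: "'a::euclidean_space set \<Rightarrow> real \<Rightarrow> 'a \<Rightarrow> 'a"
  where "push_off L t x = x + t *\<^sub>R sgn (x - closest_point L x)"

lemma push_off_0 [simp]: "push_off L 0 x = x"
  by (simp add: push_off_def)

context
  fixes L :: "'a::euclidean_space set"
  assumes affine_L: "affine L" and L_nonempty: "L \<noteq> {}"
begin

lemma norm_minus_closest_point_pos_iff: "0 < norm (x - closest_point L x) \<longleftrightarrow> x \<notin> L"
  using closest_point_refl[OF affine_closed[OF affine_L] L_nonempty, of x] by auto

lemma norm_push_off_diff: "x \<notin> L \<Longrightarrow> norm (push_off L t x - x) = \<bar>t\<bar>"
  using norm_minus_closest_point_pos_iff[of x] by (simp add: push_off_def norm_sgn)

lemma push_off_on_normal_line: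
  "push_off L t x = closest_point L x
     + (1 + t / norm (x - closest_point L x)) *\<^sub>R (x - closest_point L x)"
  by (simp add: push_off_def sgn_div_norm algebra_simps divide_inverse_commute)

lemma closest_point_push_off: "closest_point L (push_off L t x) = closest_point L x"
  unfolding push_off_on_normal_line by (rule closest_point_affine_normal_line[OF affine_L L_nonempty])

lemma push_off_minus_closest_point:
  "push_off L t x - closest_point L (push_off L t x)
     = (1 + t / norm (x - closest_point L x)) *\<^sub>R (x - closest_point L x)"
  unfolding closest_point_push_off by (simp add: push_off_on_normal_line)

lemma norm_push_off_minus_closest_point:
  assumes "x \<notin> L" "0 \<le> norm (x - closest_point L x) + t"
  shows "norm (push_off L t x - closest_point L (push_off L t x)) = norm (x - closest_point L x) + t"
proof -
  have pos: "0 < norm (x - closest_point L x)"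
    using assms(1) norm_minus_closest_point_pos_iff by blast
  moreover have "0 \<le> 1 + t / norm (x - closest_point L x)"
    using pos assms(2) by (simp add: field_simps)
  ultimately show ?thesis
    by (simp add: push_off_minus_closest_point distrib_right)
qed

lemma push_off_push_off:
  assumes "x \<notin> L" "0 < norm (x - closest_point L x) + t"
  shows "push_off L s (push_off L t x) = push_off L (s + t) x"
proof -
  have "0 < 1 + t / norm (x - closest_point L x)"
    using assms norm_minus_closest_point_pos_iff[of x] by (simp add: field_simps)
  then have "sgn (push_off L t x - closest_point L (push_off L t x)) = sgn (x - closest_point L x)"
    by (simp add: push_off_minus_closest_point sgn_scaleR)
  then show ?thesis
    by (simp add: push_off_def algebra_simps)
qed

lemma continuous_on_push_off: "continuous_on (- L) (push_off L t)"
proof -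
  have "continuous_on (- L) (closest_point L)"
    by (intro continuous_on_closest_point affine_imp_convex affine_L affine_closed[OF affine_L] L_nonempty)
  moreover have "\<forall>x\<in>- L. x - closest_point L x \<noteq> 0"
    using norm_minus_closest_point_pos_iff by force
  ultimately show ?thesis
    unfolding push_off_def[abs_def] by (intro continuous_intros)
qed

lemma lipschitz_on_push_off:
  assumes "0 < r"
  shows "(1 + 4 * \<bar>t\<bar> / r)-lipschitz_on {x. r \<le> norm (x - closest_point L x)} (push_off L t)"
proof (rule lipschitz_onI)
  fix y z assume y: "y \<in> {x. r \<le> norm (x - closest_point L x)}"
    and z: "z \<in> {x. r \<le> norm (x - closest_point L x)}"
  let ?u = "\<lambda>x. x - closest_point L x"
  have ry: "r \<le> norm (?u y)" using y by simp
  have "push_off L t y - push_off L t z = (y - z) + t *\<^sub>R (sgn (?u y) - sgn (?u z))"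
    by (simp add: push_off_def algebra_simps)
  then have dist_le: "dist (push_off L t y) (push_off L t z) \<le> dist y z + \<bar>t\<bar> * norm (sgn (?u y) - sgn (?u z))"
    by (metis dist_norm norm_scaleR norm_triangle_ineq)
  moreover have "norm (sgn (?u y) - sgn (?u z)) \<le> 4 * dist y z / r"
  proof -
    have "norm (sgn (?u y) - sgn (?u z)) \<le> 2 * norm (?u y - ?u z) / norm (?u y)"
      using assms ry by (intro norm_sgn_diff_le) auto
    also have "\<dots> \<le> 2 * (2 * dist y z) / r"
      using assms ry norm_minus_closest_point_diff_le[OF affine_imp_convex[OF affine_L] affine_closed[OF affine_L] L_nonempty]
      by (intro frac_le) auto
    finally show ?thesis by simp
  qed
  then have "\<bar>t\<bar> * norm (sgn (?u y) - sgn (?u z)) \<le> \<bar>t\<bar> * (4 * dist y z / r)"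
    by (rule mult_left_mono) simp
  moreover have "(1 + 4 * \<bar>t\<bar> / r) * dist y z = dist y z + \<bar>t\<bar> * (4 * dist y z / r)"
    by (simp add: algebra_simps)
  ultimately show "dist (push_off L t y) (push_off L t z) \<le> (1 + 4 * \<bar>t\<bar> / r) * dist y z"
    by linarith
qed (use assms in simp)

lemma homeomorphism_push_off:
  assumes "0 < t"
  shows "homeomorphism (- L) {x. t < norm (x - closest_point L x)} (push_off L t) (push_off L (- t))"
proof
  let ?T = "{x. t < norm (x - closest_point L x)}"
  have T_outside: "?T \<subseteq> - L"
    using assms norm_minus_closest_point_pos_iff by fastforce
  show "continuous_on (- L) (push_off L t)"
    by (rule continuous_on_push_off)
  show "continuous_on ?T (push_off L (- t))"
    using continuous_on_push_off T_outside by (rule continuous_on_subset)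
  show "push_off L t ` (- L) \<subseteq> ?T"
  proof
    fix y assume "y \<in> push_off L t ` (- L)"
    then obtain x where x: "x \<notin> L" and y: "y = push_off L t x" by auto
    then show "y \<in> ?T"
      using assms norm_push_off_minus_closest_point[OF x, of t] norm_minus_closest_point_pos_iff[of x]
      by auto
  qed
  show "push_off L (- t) ` ?T \<subseteq> - L"
  proof
    fix y assume "y \<in> push_off L (- t) ` ?T"
    then obtain x where x: "x \<in> ?T" and y: "y = push_off L (- t) x" by blast
    then have "x \<notin> L" using T_outside by blast
    then have "0 < norm (y - closest_point L y)"
      using x y norm_push_off_minus_closest_point[of x "- t"] by auto
    then show "y \<in> - L"
      using norm_minus_closest_point_pos_iff by blast
  qed
  show "push_off L (- t) (push_off L t x) = x" if "x \<in> - L" for x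
  proof -
    have "0 < norm (x - closest_point L x) + t"
      using that assms norm_minus_closest_point_pos_iff[of x] by (metis ComplD add_pos_pos)
    then show ?thesis
      using that push_off_push_off[of x t "- t"] by simp
  qed
  show "push_off L t (push_off L (- t) y) = y" if "y \<in> ?T" for y
    using that T_outside push_off_push_off[of y "- t" t] by auto
qed

lemma closure_dist_gt_disjoint:
  assumes "0 < t"
  shows "closure {x. t < norm (x - closest_point L x)} \<inter> L = {}"
proof -
  have "continuous_on UNIV (closest_point L)"
    by (intro continuous_on_closest_point affine_imp_convex affine_L affine_closed[OF affine_L] L_nonempty)
  then have "closed {x. t \<le> norm (x - closest_point L x)}"
    by (intro closed_Collect_le continuous_intros)
  then have "closure {x. t < norm (x - closest_point L x)} \<subseteq> {x. t \<le> norm (x - closest_point L x)}"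
    by (intro closure_minimal) auto
  then show ?thesis
    using assms norm_minus_closest_point_pos_iff by force
qed

end

theorem mainTheorem5:
  fixes L :: "'a::euclidean_space set" and m :: nat and \<epsilon> :: real
  assumes "m < DIM('a)"
    and "affine L" and "aff_dim L = int m"
    and "\<epsilon> > 0"
  shows "\<exists>\<psi> \<psi>'. homeomorphism (- L) (\<psi> ` (- L)) \<psi> \<psi>'
           \<and> \<psi> ` (- L) \<subseteq> - L
           \<and> uniformly_continuous_on (\<psi> ` (- L)) \<psi>'
           \<and> (\<forall>x \<in> - L. norm (\<psi> x - x) < \<epsilon>)
           \<and> closure (\<psi> ` (- L)) \<inter> L = {}"
proof -
  have L_nonempty: "L \<noteq> {}"
    using assms(3) by (auto simp: aff_dim_empty)
  define \<delta> where "\<delta> = \<epsilon> / 2"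
  have "0 < \<delta>" "\<delta> < \<epsilon>" using assms(4) by (simp_all add: \<delta>_def)
  let ?T = "{x. \<delta> < norm (x - closest_point L x)}"
  have homeo: "homeomorphism (- L) ?T (push_off L \<delta>) (push_off L (- \<delta>))"
    using homeomorphism_push_off[OF assms(2) L_nonempty \<open>0 < \<delta>\<close>] .
  then have image: "push_off L \<delta> ` (- L) = ?T"
    by (simp add: homeomorphism_def)
  have "(1 + 4 * \<bar>- \<delta>\<bar> / \<delta>)-lipschitz_on ?T (push_off L (- \<delta>))"
    using lipschitz_on_push_off[OF assms(2) L_nonempty \<open>0 < \<delta>\<close>]
    by (rule lipschitz_on_subset) auto
  then have "uniformly_continuous_on ?T (push_off L (- \<delta>))"
    by (rule lipschitz_on_uniformly_continuous)
  moreover have closure_disjoint: "closure ?T \<inter> L = {}"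
    using closure_dist_gt_disjoint[OF assms(2) L_nonempty \<open>0 < \<delta>\<close>] .
  moreover have "\<forall>x \<in> - L. norm (push_off L \<delta> x - x) < \<epsilon>"
    using norm_push_off_diff[OF assms(2) L_nonempty] \<open>0 < \<delta>\<close> \<open>\<delta> < \<epsilon>\<close> by simp
  moreover have "?T \<subseteq> - L"
    using closure_disjoint closure_subset[of ?T] by blast
  ultimately show ?thesis
    using homeo by (intro exI[of _ "push_off L \<delta>"] exI[of _ "push_off L (- \<delta>)"]) (simp add: image)
qed

end
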